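(* In the multispectral 2D Toda setting described in the context, let $Z_1(t)$ and $Z_2(t)$ be semi-infinite matrices such that $Z_1(t)\big(W^{(0)}_1(t_1)\big)^{-1}$ is block strictly lower triangular, $Z_2(t)\big(W^{(0)}_2(t_2)\big)^{-\top}$ is block upper triangular, and $Z_1(t)G=Z_2(t)$. Then $Z_1(t)=0$ and $Z_2(t)=0$.
   Context: Multi-indices ordered by graded lexicographic order; semi-infinite matrices partitioned in blocks indexed by $[k]=\{\boldsymbol\alpha\in\mathbb Z_+^D:|\boldsymbol\alpha|=k\}$. Spectral matrices $(\Lambda_a)_{\boldsymbol\alpha,\boldsymbol\beta}=\delta_{\boldsymbol\alpha+\boldsymbol e_a,\boldsymbol\beta}$, $\boldsymbol\Lambda^{\boldsymbol\alpha}=\Lambda_1^{\alpha_1}\cdots\Lambda_D^{\alpha_D}$. $G$ is a semi-infinite complex matrix; times $t_i=(t_{i,\boldsymbol\alpha})_{\boldsymbol\alpha\in\mathbb Z_+^D}$, $i=1,2$; $W^{(0)}_i(t_i)=\exp\big(\sum_{\boldsymbol\alpha}t_{i,\boldsymbol\alpha}\boldsymbol\Lambda^{\boldsymbol\alpha}\big)$; $G(t)=W_1^{(0)}(t_1)G\big(W_2^{(0)}(t_2)\big)^{-\top}$ is assumed to admit a block Gauss–Borel factorization $G(t)=S_1(t)^{-1}H(t)S_2(t)^{-\top}$ with $S_i$ block lower unitriangular and $H$ block diagonal. *)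

theory Defs
  imports "HOL-Analysis.Analysis"
begin

text \<open>Multi-indices in Z_+^D are functions from a finite linearly ordered index type 'd
  (with D = CARD('d)) to nat. Block structure is given by the total degree |alpha|.\<close>

type_synonym 'd midx = "'d \<Rightarrow> nat"
type_synonym 'd smat = "'d midx \<Rightarrow> 'd midx \<Rightarrow> complex"

definition deg :: "('d::finite) midx \<Rightarrow> nat" where
  "deg \<alpha> = (\<Sum>a\<in>UNIV. \<alpha> a)"

definition mmult :: "'d smat \<Rightarrow> 'd smat \<Rightarrow> 'd smat" where
  "mmult A B = (\<lambda>\<alpha> \<gamma>. \<Sum>\<^sub>\<infinity>\<beta>. A \<alpha> \<beta> * B \<beta> \<gamma>)"

definition mone :: "'d smat" where
  "mone = (\<lambda>\<alpha> \<beta>. if \<alpha> = \<beta> then 1 else 0)"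

definition mtrans :: "'d smat \<Rightarrow> 'd smat" where
  "mtrans A = (\<lambda>\<alpha> \<beta>. A \<beta> \<alpha>)"

definition mpow :: "'d smat \<Rightarrow> nat \<Rightarrow> 'd smat" where
  "mpow M n = ((mmult M) ^^ n) mone"

definition mmult3 :: "'d smat \<Rightarrow> 'd smat \<Rightarrow> 'd smat \<Rightarrow> 'd smat" where
  "mmult3 A B C = (\<lambda>\<alpha> \<gamma>. \<Sum>\<^sub>\<infinity>(\<beta>,\<delta>). A \<alpha> \<beta> * B \<beta> \<delta> * C \<delta> \<gamma>)"

definition mmult3_defined :: "'d smat \<Rightarrow> 'd smat \<Rightarrow> 'd smat \<Rightarrow> bool" where
  "mmult3_defined A B C \<longleftrightarrow>
     (\<forall>\<alpha> \<gamma>. (\<lambda>(\<beta>,\<delta>). norm (A \<alpha> \<beta> * B \<beta> \<delta> * C \<delta> \<gamma>)) summable_on UNIV)"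

definition mexp :: "'d smat \<Rightarrow> 'd smat" where
  "mexp M = (\<lambda>\<alpha> \<beta>. \<Sum>n. mpow M n \<alpha> \<beta> / of_nat (fact n))"

definition unitv :: "'d \<Rightarrow> 'd midx" where
  "unitv a = (\<lambda>b. if b = a then 1 else 0)"

definition Lam :: "'d \<Rightarrow> 'd smat" where
  "Lam a = (\<lambda>\<alpha> \<beta>. if (\<lambda>b. \<alpha> b + unitv a b) = \<beta> then 1 else 0)"

definition Lam_pow :: "('d::{finite,linorder}) midx \<Rightarrow> 'd smat" where
  "Lam_pow \<alpha> = foldr (\<lambda>a M. mmult (mpow (Lam a) (\<alpha> a)) M)
                      (sorted_list_of_set (UNIV :: 'd set)) mone"

definition tLam :: "(('d::{finite,linorder}) midx \<Rightarrow> complex) \<Rightarrow> 'd smat" where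
  "tLam t = (\<lambda>\<beta> \<gamma>. \<Sum>\<^sub>\<infinity>\<alpha>. t \<alpha> * Lam_pow \<alpha> \<beta> \<gamma>)"

definition W0 :: "(('d::{finite,linorder}) midx \<Rightarrow> complex) \<Rightarrow> 'd smat" where
  "W0 t = mexp (tLam t)"

definition W0inv :: "(('d::{finite,linorder}) midx \<Rightarrow> complex) \<Rightarrow> 'd smat" where
  "W0inv t = mexp (\<lambda>\<beta> \<gamma>. - tLam t \<beta> \<gamma>)"

definition block_lower :: "('d::finite) smat \<Rightarrow> bool" where
  "block_lower A \<longleftrightarrow> (\<forall>\<alpha> \<beta>. deg \<alpha> < deg \<beta> \<longrightarrow> A \<alpha> \<beta> = 0)"

definition block_strictly_lower :: "('d::finite) smat \<Rightarrow> bool" where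
  "block_strictly_lower A \<longleftrightarrow> (\<forall>\<alpha> \<beta>. deg \<alpha> \<le> deg \<beta> \<longrightarrow> A \<alpha> \<beta> = 0)"

definition block_upper :: "('d::finite) smat \<Rightarrow> bool" where
  "block_upper A \<longleftrightarrow> (\<forall>\<alpha> \<beta>. deg \<beta> < deg \<alpha> \<longrightarrow> A \<alpha> \<beta> = 0)"

definition block_diagonal :: "('d::finite) smat \<Rightarrow> bool" where
  "block_diagonal A \<longleftrightarrow> (\<forall>\<alpha> \<beta>. deg \<alpha> \<noteq> deg \<beta> \<longrightarrow> A \<alpha> \<beta> = 0)"

definition block_lower_unitriangular :: "('d::finite) smat \<Rightarrow> bool" where
  "block_lower_unitriangular A \<longleftrightarrow> block_lower A \<and>
     (\<forall>\<alpha> \<beta>. deg \<alpha> = deg \<beta> \<longrightarrow> A \<alpha> \<beta> = mone \<alpha> \<beta>)"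

definition block_diagonal_nonsingular :: "('d::finite) smat \<Rightarrow> bool" where
  "block_diagonal_nonsingular H \<longleftrightarrow> block_diagonal H \<and>
     (\<exists>K. block_diagonal K \<and> mmult H K = mone \<and> mmult K H = mone)"

text \<open>Inverse of a block lower unitriangular matrix (unique within that class).\<close>
definition lu_inv :: "('d::finite) smat \<Rightarrow> 'd smat" where
  "lu_inv S = (THE B. block_lower_unitriangular B \<and> mmult B S = mone \<and> mmult S B = mone)"

end

theory Submission
  imports Defs
begin

text \<open>Put \<open>L = Z\<^sub>1 W\<^sub>1\<^sup>-\<^sup>1\<close>, a block strictly lower triangular matrix with \<open>Z\<^sub>1 = L W\<^sub>1\<close>.
  Then \<open>Z\<^sub>2 W\<^sub>2\<^sup>-\<^sup>\<top> = L W\<^sub>1 G W\<^sub>2\<^sup>-\<^sup>\<top> = L S\<^sub>1\<^sup>-\<^sup>1 H S\<^sub>2\<^sup>-\<^sup>\<top>\<close>, so \<open>Q = L S\<^sub>1\<^sup>-\<^sup>1 H\<close> is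
  block strictly lower triangular and at the same time equal to the block upper triangular
  matrix \<open>Z\<^sub>2 W\<^sub>2\<^sup>-\<^sup>\<top> S\<^sub>2\<^sup>\<top>\<close>. Hence \<open>Q = 0\<close>, and cancelling the invertible factors \<open>H\<close> and
  \<open>S\<^sub>1\<^sup>-\<^sup>1\<close> gives \<open>L = 0\<close>, so \<open>Z\<^sub>1 = Z\<^sub>2 = 0\<close>.

  The work lies in justifying these rearrangements of infinite matrix products. Block lower
  triangular matrices are row-finite; the inverse of a block lower unitriangular \<open>S\<close> is the
  Neumann series in \<open>1 - S\<close>, which is finite on every row; and the matrices \<open>W\<^sup>(\<^sup>0\<^sup>)\<close> are
  exponentials of matrices that are upper triangular for the componentwise order of
  multi-indices, hence column-finite, with \<open>exp(-M) exp M = 1\<close> by a Cauchy product.\<close>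

section \<open>Row- and column-finite matrices\<close>

text \<open>\<open>mmult\<close> is total because \<open>\<Sum>\<^sub>\<infinity>\<close> returns \<open>0\<close> on non-summable families; products are
  associative only under finiteness conditions such as the following.\<close>

definition row_finite :: "'d smat \<Rightarrow> bool" where
  "row_finite A \<longleftrightarrow> (\<forall>a. finite {x. A a x \<noteq> 0})"

definition col_finite :: "'d smat \<Rightarrow> bool" where
  "col_finite A \<longleftrightarrow> row_finite (mtrans A)"

lemma mmult_eq_sum:
  assumes "finite F" "\<And>x. x \<notin> F \<Longrightarrow> A a x * B x c = 0"
  shows "mmult A B a c = (\<Sum>x\<in>F. A a x * B x c)"
proof -
  have "mmult A B a c = infsum (\<lambda>x. A a x * B x c) F"
    unfolding mmult_def by (rule infsum_cong_neutral) (use assms in auto)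
  then show ?thesis using assms(1) by simp
qed

lemma mmult_eq_sum_row:
  assumes "row_finite A"
  shows "mmult A B a c = (\<Sum>x | A a x \<noteq> 0. A a x * B x c)"
  using assms unfolding row_finite_def by (intro mmult_eq_sum) auto

lemma mmult_nonzeroE:
  assumes "mmult A B a c \<noteq> 0"
  obtains x where "A a x \<noteq> 0" "B x c \<noteq> 0"
proof -
  have "\<exists>x. A a x * B x c \<noteq> 0"
  proof (rule ccontr)
    assume "\<nexists>x. A a x * B x c \<noteq> 0"
    then have "mmult A B a c = 0" unfolding mmult_def by (simp add: infsum_0)
    with assms show False by simp
  qed
  then show ?thesis using that by auto
qed

lemma mmult_zero_left [simp]: "mmult (\<lambda>_ _. 0) B = (\<lambda>_ _. 0)"
  unfolding mmult_def by simp

lemma mmult_mone_right [simp]: "mmult A mone = A"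
proof (intro ext)
  fix a c
  have "mmult A mone a c = (\<Sum>x\<in>{c}. A a x * mone x c)"
    by (rule mmult_eq_sum) (auto simp: mone_def)
  then show "mmult A mone a c = A a c" by (simp add: mone_def)
qed

lemma mmult_mone_left [simp]: "mmult mone B = B"
proof (intro ext)
  fix a c
  have "mmult mone B a c = (\<Sum>x\<in>{a}. mone a x * B x c)"
    by (rule mmult_eq_sum) (auto simp: mone_def)
  then show "mmult mone B a c = B a c" by (simp add: mone_def)
qed

lemma mtrans_mtrans [simp]: "mtrans (mtrans A) = A"
  unfolding mtrans_def by simp

lemma mtrans_mmult: "mtrans (mmult A B) = mmult (mtrans B) (mtrans A)"
  unfolding mtrans_def mmult_def by (simp add: mult.commute)

lemma mtrans_mone [simp]: "mtrans mone = mone"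
  unfolding mtrans_def mone_def by (auto intro!: ext)

lemma col_finite_mtrans [simp]: "col_finite (mtrans A) \<longleftrightarrow> row_finite A"
  unfolding col_finite_def by simp

lemma row_finite_mone: "row_finite mone"
proof -
  have support: "{x. mone a x \<noteq> (0::complex)} = {a}" for a :: "'d midx"
    by (auto simp: mone_def)
  show ?thesis unfolding row_finite_def by (simp add: support)
qed

lemma row_finite_mmult:
  assumes "row_finite A" "row_finite B"
  shows "row_finite (mmult A B)"
  unfolding row_finite_def
proof
  fix a
  have "{y. mmult A B a y \<noteq> 0} \<subseteq> (\<Union>x\<in>{x. A a x \<noteq> 0}. {y. B x y \<noteq> 0})"
  proof
    fix y assume "y \<in> {y. mmult A B a y \<noteq> 0}"
    then obtain x where "A a x \<noteq> 0" "B x y \<noteq> 0" by (auto elim!: mmult_nonzeroE)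
    then show "y \<in> (\<Union>x\<in>{x. A a x \<noteq> 0}. {y. B x y \<noteq> 0})" by blast
  qed
  moreover have "finite (\<Union>x\<in>{x. A a x \<noteq> 0}. {y. B x y \<noteq> 0})"
    using assms by (auto simp: row_finite_def)
  ultimately show "finite {y. mmult A B a y \<noteq> 0}" by (rule finite_subset)
qed

lemma mmult_assoc_row_finite:
  assumes "row_finite A" "row_finite B"
  shows "mmult (mmult A B) C = mmult A (mmult B C)"
proof (intro ext)
  fix a c
  define R where "R = {x. A a x \<noteq> 0}"
  define S where "S = (\<Union>x\<in>R. {y. B x y \<noteq> 0})"
  have "finite R" using assms(1) by (simp add: row_finite_def R_def)
  then have "finite S" using assms(2) by (auto simp: row_finite_def S_def)
  have AB: "mmult A B a y = (\<Sum>x\<in>R. A a x * B x y)" for y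
    unfolding R_def by (rule mmult_eq_sum_row[OF assms(1)])
  have "mmult A B a y = 0" if "y \<notin> S" for y
    unfolding AB by (rule sum.neutral) (use that in \<open>auto simp: S_def\<close>)
  then have "mmult (mmult A B) C a c = (\<Sum>y\<in>S. mmult A B a y * C y c)"
    by (intro mmult_eq_sum[OF \<open>finite S\<close>]) simp
  also have "\<dots> = (\<Sum>x\<in>R. \<Sum>y\<in>S. A a x * B x y * C y c)"
    by (simp add: AB sum_distrib_right sum.swap[of _ S])
  also have "\<dots> = (\<Sum>x\<in>R. A a x * mmult B C x c)"
  proof (rule sum.cong[OF refl])
    fix x assume "x \<in> R"
    then have "mmult B C x c = (\<Sum>y\<in>S. B x y * C y c)"
      by (intro mmult_eq_sum[OF \<open>finite S\<close>]) (auto simp: S_def)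
    then show "(\<Sum>y\<in>S. A a x * B x y * C y c) = A a x * mmult B C x c"
      by (simp add: sum_distrib_left mult.assoc)
  qed
  also have "\<dots> = mmult A (mmult B C) a c"
    unfolding R_def by (rule mmult_eq_sum_row[OF assms(1), symmetric])
  finally show "mmult (mmult A B) C a c = mmult A (mmult B C) a c" .
qed

lemma mmult_assoc_col_finite:
  assumes "col_finite B" "col_finite C"
  shows "mmult (mmult A B) C = mmult A (mmult B C)"
proof -
  have "mtrans (mmult (mmult A B) C) = mtrans (mmult A (mmult B C))"
    using assms unfolding col_finite_def by (simp add: mtrans_mmult mmult_assoc_row_finite)
  then show ?thesis by (metis mtrans_mtrans)
qed

lemma mmult_diff_left:
  assumes "row_finite A" "row_finite A'"
  shows "mmult (A - A') B = mmult A B - mmult A' B"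
proof (intro ext)
  fix a c
  define F where "F = {x. A a x \<noteq> 0} \<union> {x. A' a x \<noteq> 0}"
  have F: "finite F" using assms by (simp add: row_finite_def F_def)
  have "mmult (A - A') B a c = (\<Sum>x\<in>F. (A - A') a x * B x c)"
    by (rule mmult_eq_sum[OF F]) (auto simp: F_def)
  also have "\<dots> = (\<Sum>x\<in>F. A a x * B x c) - (\<Sum>x\<in>F. A' a x * B x c)"
    by (simp add: left_diff_distrib sum_subtractf)
  also have "\<dots> = mmult A B a c - mmult A' B a c"
    using mmult_eq_sum[OF F, of A a B c] mmult_eq_sum[OF F, of A' a B c] by (simp add: F_def)
  finally show "mmult (A - A') B a c = (mmult A B - mmult A' B) a c" by simp
qed

lemma mmult_diff_right:
  assumes "row_finite B"
  shows "mmult B (A - A') = mmult B A - mmult B A'"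
proof (intro ext)
  fix a c
  define F where "F = {x. B a x \<noteq> 0}"
  have F: "finite F" using assms by (simp add: row_finite_def F_def)
  have "mmult B (A - A') a c = (\<Sum>x\<in>F. B a x * (A - A') x c)"
    by (rule mmult_eq_sum[OF F]) (simp add: F_def)
  also have "\<dots> = (\<Sum>x\<in>F. B a x * A x c) - (\<Sum>x\<in>F. B a x * A' x c)"
    by (simp add: right_diff_distrib sum_subtractf)
  also have "\<dots> = mmult B A a c - mmult B A' a c"
    using mmult_eq_sum[OF F, of B a A c] mmult_eq_sum[OF F, of B a A' c] by (simp add: F_def)
  finally show "mmult B (A - A') a c = (mmult B A - mmult B A') a c" by simp
qed

lemma mmult_sum_left:
  assumes "finite K" "\<And>k. k \<in> K \<Longrightarrow> row_finite (M k)"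
  shows "mmult (\<lambda>a x. \<Sum>k\<in>K. M k a x) B a c = (\<Sum>k\<in>K. mmult (M k) B a c)"
proof -
  define F where "F = (\<Union>k\<in>K. {x. M k a x \<noteq> 0})"
  have F: "finite F" using assms by (auto simp: row_finite_def F_def)
  have "mmult (\<lambda>a x. \<Sum>k\<in>K. M k a x) B a c = (\<Sum>x\<in>F. (\<Sum>k\<in>K. M k a x) * B x c)"
    by (rule mmult_eq_sum[OF F]) (auto simp: F_def intro!: sum.neutral)
  also have "\<dots> = (\<Sum>k\<in>K. \<Sum>x\<in>F. M k a x * B x c)"
    by (simp add: sum_distrib_right sum.swap[of _ F])
  also have "\<dots> = (\<Sum>k\<in>K. mmult (M k) B a c)"
    by (intro sum.cong refl mmult_eq_sum[OF F, symmetric]) (auto simp: F_def)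
  finally show ?thesis .
qed

lemma mmult_sum_right:
  assumes "row_finite A" "finite K"
  shows "mmult A (\<lambda>x c. \<Sum>k\<in>K. M k x c) a c = (\<Sum>k\<in>K. mmult A (M k) a c)"
proof -
  define F where "F = {x. A a x \<noteq> 0}"
  have F: "finite F" using assms by (simp add: row_finite_def F_def)
  have "mmult A (\<lambda>x c. \<Sum>k\<in>K. M k x c) a c = (\<Sum>x\<in>F. A a x * (\<Sum>k\<in>K. M k x c))"
    by (rule mmult_eq_sum[OF F]) (simp add: F_def)
  also have "\<dots> = (\<Sum>k\<in>K. \<Sum>x\<in>F. A a x * M k x c)"
    by (simp add: sum_distrib_left sum.swap[of _ F])
  also have "\<dots> = (\<Sum>k\<in>K. mmult A (M k) a c)"
    by (intro sum.cong refl mmult_eq_sum[OF F, symmetric]) (simp add: F_def)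
  finally show ?thesis .
qed

lemma mpow_0: "mpow M 0 = mone"
  by (simp add: mpow_def)

lemma mpow_Suc: "mpow M (Suc k) = mmult M (mpow M k)"
  by (simp add: mpow_def)

lemma row_finite_mpow: "row_finite M \<Longrightarrow> row_finite (mpow M k)"
  by (induction k) (simp_all add: mpow_0 mpow_Suc row_finite_mone row_finite_mmult)

lemma mpow_Suc_right:
  assumes "row_finite M"
  shows "mmult (mpow M k) M = mpow M (Suc k)"
proof (induction k)
  case 0
  then show ?case by (simp add: mpow_0 mpow_Suc)
next
  case (Suc k)
  have "mmult (mpow M (Suc k)) M = mmult M (mmult (mpow M k) M)"
    by (simp add: mpow_Suc mmult_assoc_row_finite assms row_finite_mpow)
  then show ?case using Suc by (simp add: mpow_Suc)
qed

lemma mmult_eq_zero_cancel_right: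
  assumes "row_finite A" "row_finite B" "mmult B C = mone" "mmult A B = (\<lambda>_ _. 0)"
  shows "A = (\<lambda>_ _. 0)"
proof -
  have "A = mmult A (mmult B C)" using assms(3) by simp
  also have "\<dots> = mmult (mmult A B) C" using assms(1,2) by (simp add: mmult_assoc_row_finite)
  finally show ?thesis using assms(4) by simp
qed

section \<open>Block triangular matrices and their inverses\<close>

lemma le_deg: "(\<alpha>::('d::finite) midx) a \<le> deg \<alpha>"
  unfolding deg_def by (rule member_le_sum) auto

lemma finite_deg_le: "finite {\<alpha>::('d::finite) midx. deg \<alpha> \<le> k}"
proof (rule finite_subset)
  show "{\<alpha>::'d midx. deg \<alpha> \<le> k} \<subseteq> Pi\<^sub>E UNIV (\<lambda>_. {..k})"
    by (auto simp: PiE_UNIV_domain intro: order_trans[OF le_deg])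
qed (rule finite_PiE; simp)

lemma block_lowerD: "block_lower A \<Longrightarrow> A \<alpha> \<beta> \<noteq> 0 \<Longrightarrow> deg \<beta> \<le> deg \<alpha>"
  unfolding block_lower_def using not_le by blast

lemma block_strictly_lowerD: "block_strictly_lower A \<Longrightarrow> A \<alpha> \<beta> \<noteq> 0 \<Longrightarrow> deg \<beta> < deg \<alpha>"
  unfolding block_strictly_lower_def using not_le by blast

lemma block_upperD: "block_upper A \<Longrightarrow> A \<alpha> \<beta> \<noteq> 0 \<Longrightarrow> deg \<alpha> \<le> deg \<beta>"
  unfolding block_upper_def using not_le by blast

lemma block_strictly_lower_imp_block_lower: "block_strictly_lower A \<Longrightarrow> block_lower A"
  unfolding block_strictly_lower_def block_lower_def by simp

lemma block_lower_unitriangular_imp_block_lower: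
  "block_lower_unitriangular A \<Longrightarrow> block_lower A"
  unfolding block_lower_unitriangular_def by simp

lemma block_diagonal_imp_block_lower: "block_diagonal A \<Longrightarrow> block_lower A"
  unfolding block_diagonal_def block_lower_def by simp

lemma block_lower_row_finite: "block_lower A \<Longrightarrow> row_finite A"
  unfolding row_finite_def by (auto intro: finite_subset[OF _ finite_deg_le] dest: block_lowerD)

lemma block_lower_imp_block_upper_mtrans: "block_lower A \<Longrightarrow> block_upper (mtrans A)"
  unfolding block_lower_def block_upper_def mtrans_def by simp

lemma block_strictly_lower_mmult:
  fixes A B :: "('d::finite) smat"
  assumes "block_strictly_lower A" "block_lower B"
  shows "block_strictly_lower (mmult A B)"
  unfolding block_strictly_lower_def
proof (intro allI impI)
  fix \<alpha> \<gamma> :: "'d midx" assume "deg \<alpha> \<le> deg \<gamma>"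
  show "mmult A B \<alpha> \<gamma> = 0"
  proof (rule ccontr)
    assume "mmult A B \<alpha> \<gamma> \<noteq> 0"
    then obtain \<beta> where "A \<alpha> \<beta> \<noteq> 0" "B \<beta> \<gamma> \<noteq> 0" by (rule mmult_nonzeroE)
    with assms have "deg \<beta> < deg \<alpha>" "deg \<gamma> \<le> deg \<beta>"
      by (auto dest: block_strictly_lowerD block_lowerD)
    with \<open>deg \<alpha> \<le> deg \<gamma>\<close> show False by simp
  qed
qed

lemma block_upper_mmult:
  fixes A B :: "('d::finite) smat"
  assumes "block_upper A" "block_upper B"
  shows "block_upper (mmult A B)"
  unfolding block_upper_def
proof (intro allI impI)
  fix \<alpha> \<gamma> :: "'d midx" assume "deg \<gamma> < deg \<alpha>"
  show "mmult A B \<alpha> \<gamma> = 0"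
  proof (rule ccontr)
    assume "mmult A B \<alpha> \<gamma> \<noteq> 0"
    then obtain \<beta> where "A \<alpha> \<beta> \<noteq> 0" "B \<beta> \<gamma> \<noteq> 0" by (rule mmult_nonzeroE)
    with assms have "deg \<alpha> \<le> deg \<beta>" "deg \<beta> \<le> deg \<gamma>" by (auto dest: block_upperD)
    with \<open>deg \<gamma> < deg \<alpha>\<close> show False by simp
  qed
qed

lemma block_strictly_lower_block_upper_eq_zero:
  assumes "block_strictly_lower A" "block_upper A"
  shows "A = (\<lambda>_ _. 0)"
  using assms unfolding block_strictly_lower_def block_upper_def by (meson ext not_le)

lemma block_strictly_lower_mpow_eq_0:
  assumes "block_strictly_lower N" "deg \<alpha> < deg \<gamma> + k"
  shows "mpow N k \<alpha> \<gamma> = 0"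
  using assms(2)
proof (induction k arbitrary: \<alpha>)
  case 0
  then show ?case by (auto simp: mpow_0 mone_def)
next
  case (Suc k)
  show ?case
  proof (rule ccontr)
    assume "mpow N (Suc k) \<alpha> \<gamma> \<noteq> 0"
    then obtain \<beta> where "N \<alpha> \<beta> \<noteq> 0" "mpow N k \<beta> \<gamma> \<noteq> 0"
      unfolding mpow_Suc by (rule mmult_nonzeroE)
    moreover from \<open>N \<alpha> \<beta> \<noteq> 0\<close> have "deg \<beta> < deg \<alpha>"
      by (rule block_strictly_lowerD[OF assms(1)])
    ultimately show False using Suc by simp
  qed
qed

text \<open>Truncating the Neumann series \<open>\<Sum>\<^sub>k N\<^sup>k\<close> at the row degree loses nothing, since row
  \<open>\<alpha>\<close> of \<open>N\<^sup>k\<close> vanishes for \<open>k > deg \<alpha>\<close>.\<close>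

definition neumann :: "('d::finite) smat \<Rightarrow> 'd smat" where
  "neumann N = (\<lambda>\<alpha> \<gamma>. \<Sum>k\<le>deg \<alpha>. mpow N k \<alpha> \<gamma>)"

lemma neumann_eq_sum:
  assumes "block_strictly_lower N" "deg \<alpha> \<le> n"
  shows "neumann N \<alpha> \<gamma> = (\<Sum>k\<le>n. mpow N k \<alpha> \<gamma>)"
  unfolding neumann_def
  using block_strictly_lower_mpow_eq_0[OF assms(1), of \<alpha> \<gamma>] assms(2)
  by (intro sum.mono_neutral_left) (auto simp: not_le intro: trans_less_add2)

lemma neumann_eq_mone_plus:
  assumes "block_strictly_lower N"
  shows "neumann N \<alpha> \<gamma> = mone \<alpha> \<gamma> + (\<Sum>k\<le>deg \<alpha>. mpow N (Suc k) \<alpha> \<gamma>)"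
proof -
  have "neumann N \<alpha> \<gamma> = (\<Sum>k\<le>Suc (deg \<alpha>). mpow N k \<alpha> \<gamma>)"
    using assms by (rule neumann_eq_sum) simp
  then show ?thesis by (simp only: sum.atMost_Suc_shift mpow_0)
qed

lemma block_lower_unitriangular_neumann:
  assumes "block_strictly_lower N"
  shows "block_lower_unitriangular (neumann N)"
  unfolding block_lower_unitriangular_def block_lower_def
proof (intro conjI allI impI)
  fix \<alpha> \<gamma>
  show "neumann N \<alpha> \<gamma> = 0" if "deg \<alpha> < deg \<gamma>"
    unfolding neumann_def using that
    by (intro sum.neutral ballI block_strictly_lower_mpow_eq_0[OF assms]) auto
  show "neumann N \<alpha> \<gamma> = mone \<alpha> \<gamma>" if "deg \<alpha> = deg \<gamma>"
    using that by (simp add: neumann_eq_mone_plus[OF assms] block_strictly_lower_mpow_eq_0[OF assms])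
qed

lemma mmult_neumann_left:
  assumes N: "block_strictly_lower N"
  shows "mmult N (neumann N) = neumann N - mone"
proof (intro ext)
  fix \<alpha> \<gamma>
  have row_finite: "row_finite N"
    by (rule block_lower_row_finite[OF block_strictly_lower_imp_block_lower[OF N]])
  have "mmult N (neumann N) \<alpha> \<gamma> = mmult N (\<lambda>\<beta> \<gamma>. \<Sum>k\<le>deg \<alpha>. mpow N k \<beta> \<gamma>) \<alpha> \<gamma>"
    unfolding mmult_def
  proof (rule infsum_cong)
    fix \<beta>
    have "neumann N \<beta> \<gamma> = (\<Sum>k\<le>deg \<alpha>. mpow N k \<beta> \<gamma>)" if "N \<alpha> \<beta> \<noteq> 0"
      using N block_strictly_lowerD[OF N that] by (simp add: neumann_eq_sum)
    then show "N \<alpha> \<beta> * neumann N \<beta> \<gamma> = N \<alpha> \<beta> * (\<Sum>k\<le>deg \<alpha>. mpow N k \<beta> \<gamma>)"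
      by (cases "N \<alpha> \<beta> = 0") simp_all
  qed
  also have "\<dots> = (\<Sum>k\<le>deg \<alpha>. mpow N (Suc k) \<alpha> \<gamma>)"
    by (simp add: mmult_sum_right[OF row_finite] mpow_Suc)
  finally show "mmult N (neumann N) \<alpha> \<gamma> = (neumann N - mone) \<alpha> \<gamma>"
    by (simp add: neumann_eq_mone_plus[OF N])
qed

lemma mmult_neumann_right:
  assumes N: "block_strictly_lower N"
  shows "mmult (neumann N) N = neumann N - mone"
proof (intro ext)
  fix \<alpha> \<gamma>
  have row_finite: "row_finite N"
    by (rule block_lower_row_finite[OF block_strictly_lower_imp_block_lower[OF N]])
  have "mmult (neumann N) N \<alpha> \<gamma> = mmult (\<lambda>\<alpha>' \<beta>. \<Sum>k\<le>deg \<alpha>. mpow N k \<alpha>' \<beta>) N \<alpha> \<gamma>"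
    by (simp add: mmult_def neumann_def)
  also have "\<dots> = (\<Sum>k\<le>deg \<alpha>. mpow N (Suc k) \<alpha> \<gamma>)"
    by (simp add: mmult_sum_left row_finite_mpow[OF row_finite] mpow_Suc_right[OF row_finite])
  finally show "mmult (neumann N) N \<alpha> \<gamma> = (neumann N - mone) \<alpha> \<gamma>"
    by (simp add: neumann_eq_mone_plus[OF N])
qed

lemma block_lower_unitriangular_inverse_exists:
  assumes S: "block_lower_unitriangular S"
  shows "\<exists>B. block_lower_unitriangular B \<and> mmult B S = mone \<and> mmult S B = mone"
proof -
  define N where "N = mone - S"
  have S_eq: "S = mone - N" by (simp add: N_def fun_eq_iff)
  have N: "block_strictly_lower N"
    using S unfolding N_def block_strictly_lower_def block_lower_unitriangular_def block_lower_def
    by (metis diff_self le_neq_implies_less mone_def diff_zero fun_diff_def)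
  have row_finite: "row_finite N" "row_finite (neumann N)"
    by (simp_all add: block_lower_row_finite block_strictly_lower_imp_block_lower N
        block_lower_unitriangular_imp_block_lower block_lower_unitriangular_neumann)
  have "mmult (neumann N) S = mone"
    by (simp add: S_eq mmult_diff_right row_finite mmult_neumann_right N fun_eq_iff)
  moreover have "mmult S (neumann N) = mone"
    by (simp add: S_eq mmult_diff_left row_finite_mone row_finite mmult_neumann_left N fun_eq_iff)
  ultimately show ?thesis using block_lower_unitriangular_neumann[OF N] by blast
qed

lemma block_lower_unitriangular_inverse_unique:
  assumes "block_lower_unitriangular B" "block_lower_unitriangular S"
    and "mmult B S = mone" "mmult S B' = mone"
  shows "B = B'"
proof -
  have "B = mmult B (mmult S B')" using assms(4) by simp
  also have "\<dots> = mmult (mmult B S) B'"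
    using assms(1,2) by (simp add: mmult_assoc_row_finite block_lower_row_finite
        block_lower_unitriangular_imp_block_lower)
  finally show ?thesis using assms(3) by simp
qed

lemma lu_inv:
  assumes "block_lower_unitriangular S"
  shows "block_lower_unitriangular (lu_inv S)" "mmult (lu_inv S) S = mone" "mmult S (lu_inv S) = mone"
proof -
  have "\<exists>!B. block_lower_unitriangular B \<and> mmult B S = mone \<and> mmult S B = mone"
    using block_lower_unitriangular_inverse_exists[OF assms]
      block_lower_unitriangular_inverse_unique[OF _ assms] by blast
  then have "block_lower_unitriangular (lu_inv S) \<and> mmult (lu_inv S) S = mone \<and> mmult S (lu_inv S) = mone"
    unfolding lu_inv_def by (rule theI')
  then show "block_lower_unitriangular (lu_inv S)" "mmult (lu_inv S) S = mone" "mmult S (lu_inv S) = mone"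
    by simp_all
qed

lemma block_strictly_lower_mmult_factorization_eq_zero:
  assumes L: "block_strictly_lower L"
    and S1: "block_lower_unitriangular S1" and S2: "block_lower_unitriangular S2"
    and H: "block_diagonal_nonsingular H"
    and upper: "block_upper (mmult L (mmult (mmult (lu_inv S1) H) (mtrans (lu_inv S2))))"
  shows "L = (\<lambda>_ _. 0)"
proof -
  define Q where "Q = mmult (mmult L (lu_inv S1)) H"
  obtain K where K: "mmult H K = mone"
    using H unfolding block_diagonal_nonsingular_def by blast
  have lower: "block_lower L" "block_lower (lu_inv S1)" "block_lower (lu_inv S2)"
    "block_lower S2" "block_lower H"
    using L S2 H lu_inv(1)[OF S1] lu_inv(1)[OF S2]
    by (simp_all add: block_strictly_lower_imp_block_lower block_diagonal_nonsingular_def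
        block_diagonal_imp_block_lower block_lower_unitriangular_imp_block_lower)
  note row_finite = lower[THEN block_lower_row_finite]
  have "mmult L (mmult (mmult (lu_inv S1) H) (mtrans (lu_inv S2))) = mmult Q (mtrans (lu_inv S2))"
    unfolding Q_def using row_finite by (simp add: mmult_assoc_row_finite row_finite_mmult)
  then have "mmult (mmult L (mmult (mmult (lu_inv S1) H) (mtrans (lu_inv S2)))) (mtrans S2)
      = mmult Q (mmult (mtrans (lu_inv S2)) (mtrans S2))"
    using row_finite by (simp add: mmult_assoc_col_finite)
  also have "mmult (mtrans (lu_inv S2)) (mtrans S2) = mone"
    using lu_inv(3)[OF S2] by (simp add: mtrans_mmult[symmetric])
  finally have "block_upper Q"
    using block_upper_mmult[OF upper block_lower_imp_block_upper_mtrans[OF lower(4)]] by simp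
  moreover have "block_strictly_lower Q"
    unfolding Q_def
    by (rule block_strictly_lower_mmult[OF block_strictly_lower_mmult[OF L lower(2)] lower(5)])
  ultimately have "mmult (mmult L (lu_inv S1)) H = (\<lambda>_ _. 0)"
    unfolding Q_def by (intro block_strictly_lower_block_upper_eq_zero)
  then have "mmult L (lu_inv S1) = (\<lambda>_ _. 0)"
    by (rule mmult_eq_zero_cancel_right[OF row_finite_mmult[OF row_finite(1,2)] row_finite(5) K])
  then show ?thesis
    by (rule mmult_eq_zero_cancel_right[OF row_finite(1,2) lu_inv(2)[OF S1]])
qed

section \<open>The matrices \<open>W\<^sup>(\<^sup>0\<^sup>)\<close>\<close>

text \<open>\<open>\<Lambda>\<^sub>a\<close> raises multi-indices, so every \<open>W\<^sup>(\<^sup>0\<^sup>)\<close> is upper triangular for the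
  componentwise order.\<close>

definition order_upper :: "'d smat \<Rightarrow> bool" where
  "order_upper A \<longleftrightarrow> (\<forall>\<beta> \<gamma>. A \<beta> \<gamma> \<noteq> 0 \<longrightarrow> \<beta> \<le> \<gamma>)"

lemma finite_midx_le: "finite {\<beta>::('d::finite) midx. \<beta> \<le> \<gamma>}"
proof (rule finite_subset)
  show "{\<beta>::'d midx. \<beta> \<le> \<gamma>} \<subseteq> Pi\<^sub>E UNIV (\<lambda>a. {..\<gamma> a})"
    by (auto simp: PiE_UNIV_domain le_fun_def)
qed (rule finite_PiE; simp)

lemma order_upper_col_finite:
  fixes A :: "('d::finite) smat"
  assumes "order_upper A"
  shows "col_finite A"
  unfolding col_finite_def row_finite_def mtrans_def
proof
  fix \<gamma>
  show "finite {\<beta>. A \<beta> \<gamma> \<noteq> 0}"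
    by (rule finite_subset[OF _ finite_midx_le]) (use assms in \<open>auto simp: order_upper_def\<close>)
qed

lemma mmult_order_upper_eq_sum:
  fixes B :: "('d::finite) smat"
  assumes "order_upper B"
  shows "mmult A B \<beta> \<gamma> = (\<Sum>\<delta> | \<delta> \<le> \<gamma>. A \<beta> \<delta> * B \<delta> \<gamma>)"
  by (rule mmult_eq_sum[OF finite_midx_le]) (use assms in \<open>auto simp: order_upper_def\<close>)

lemma order_upper_mone: "order_upper mone"
  unfolding order_upper_def mone_def by auto

lemma order_upper_uminus: "order_upper M \<Longrightarrow> order_upper (- M)"
  unfolding order_upper_def by simp

lemma order_upper_mmult:
  assumes "order_upper A" "order_upper B"
  shows "order_upper (mmult A B)"
  unfolding order_upper_def
proof (intro allI impI)
  fix \<beta> \<gamma> assume "mmult A B \<beta> \<gamma> \<noteq> 0"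
  then obtain \<delta> where "A \<beta> \<delta> \<noteq> 0" "B \<delta> \<gamma> \<noteq> 0" by (rule mmult_nonzeroE)
  with assms have "\<beta> \<le> \<delta>" "\<delta> \<le> \<gamma>" by (auto simp: order_upper_def)
  then show "\<beta> \<le> \<gamma>" by (rule order_trans)
qed

lemma order_upper_mpow: "order_upper M \<Longrightarrow> order_upper (mpow M k)"
  by (induction k) (simp_all add: mpow_0 mpow_Suc order_upper_mone order_upper_mmult)

lemma order_upper_Lam: "order_upper (Lam a)"
  unfolding order_upper_def Lam_def by (auto simp: le_fun_def)

lemma order_upper_Lam_pow: "order_upper (Lam_pow \<alpha>)"
proof -
  have "order_upper (foldr (\<lambda>a M. mmult (mpow (Lam a) (\<alpha> a)) M) as mone)" for as
    by (induction as) (simp_all add: order_upper_mone order_upper_mmult order_upper_mpow order_upper_Lam)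
  then show ?thesis unfolding Lam_pow_def by blast
qed

lemma order_upper_tLam: "order_upper (tLam (t :: ('d::{finite,linorder}) midx \<Rightarrow> complex))"
  unfolding order_upper_def tLam_def
proof (intro allI impI)
  fix \<beta> \<gamma> :: "'d midx"
  assume "(\<Sum>\<^sub>\<infinity>\<alpha>. t \<alpha> * Lam_pow \<alpha> \<beta> \<gamma>) \<noteq> 0"
  then obtain \<alpha> where "Lam_pow \<alpha> \<beta> \<gamma> \<noteq> 0"
    using infsum_0[of UNIV "\<lambda>\<alpha>. t \<alpha> * Lam_pow \<alpha> \<beta> \<gamma>"] by force
  then show "\<beta> \<le> \<gamma>" using order_upper_Lam_pow unfolding order_upper_def by blast
qed

lemma order_upper_mexp:
  assumes "order_upper M"
  shows "order_upper (mexp M)"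
  unfolding order_upper_def
proof (intro allI impI)
  fix \<beta> \<gamma> assume nonzero: "mexp M \<beta> \<gamma> \<noteq> 0"
  show "\<beta> \<le> \<gamma>"
  proof (rule ccontr)
    assume "\<not> \<beta> \<le> \<gamma>"
    then have "mpow M n \<beta> \<gamma> = 0" for n
      using order_upper_mpow[OF assms] unfolding order_upper_def by blast
    then have "mexp M \<beta> \<gamma> = 0" by (simp add: mexp_def)
    with nonzero show False by contradiction
  qed
qed

lemma mpow_add:
  fixes M :: "('d::finite) smat"
  assumes "order_upper M"
  shows "mpow M (m + n) = mmult (mpow M m) (mpow M n)"
proof (induction m)
  case 0
  then show ?case by (simp add: mpow_0)
next
  case (Suc m)
  have "mpow M (Suc m + n) = mmult M (mmult (mpow M m) (mpow M n))"
    using Suc by (simp add: mpow_Suc)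
  also have "\<dots> = mmult (mmult M (mpow M m)) (mpow M n)"
    using assms by (simp add: mmult_assoc_col_finite order_upper_col_finite order_upper_mpow)
  finally show ?case by (simp add: mpow_Suc)
qed

lemma mpow_uminus: "mpow (- M) k = (\<lambda>\<beta> \<gamma>. (-1)^k * mpow M k \<beta> \<gamma>)"
proof (induction k)
  case 0
  then show ?case by (simp add: mpow_0)
next
  case (Suc k)
  show ?case
  proof (intro ext)
    fix \<beta> \<gamma>
    have "mpow (- M) (Suc k) \<beta> \<gamma> = (\<Sum>\<^sub>\<infinity>\<delta>. (-1)^(Suc k) * (M \<beta> \<delta> * mpow M k \<delta> \<gamma>))"
      unfolding mpow_Suc Suc mmult_def by (intro infsum_cong) simp
    also have "\<dots> = (-1)^(Suc k) * mpow M (Suc k) \<beta> \<gamma>"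
      unfolding mpow_Suc mmult_def by (rule infsum_cmult_right')
    finally show "mpow (- M) (Suc k) \<beta> \<gamma> = (-1)^(Suc k) * mpow M (Suc k) \<beta> \<gamma>" .
  qed
qed

text \<open>A column of an \<open>order_upper\<close> matrix meets only the finitely many indices below it,
  so the entries of its powers grow at most geometrically.\<close>
lemma mpow_norm_bound:
  fixes M :: "('d::finite) smat"
  assumes M: "order_upper M"
  obtains C where "C \<ge> 0" "\<And>n \<beta>. norm (mpow M n \<beta> \<gamma>) \<le> C ^ n"
proof -
  define K where "K = {\<delta>::'d midx. \<delta> \<le> \<gamma>}"
  have K: "finite K" unfolding K_def by (rule finite_midx_le)
  define C where "C = (\<Sum>\<delta>\<in>K. \<Sum>\<epsilon>\<in>K. norm (M \<delta> \<epsilon>))"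
  have "C \<ge> 0" unfolding C_def by (intro sum_nonneg) auto
  have row_bound: "(\<Sum>\<epsilon>\<in>K. norm (M \<delta> \<epsilon>)) \<le> C" if "\<delta> \<in> K" for \<delta>
    unfolding C_def by (rule member_le_sum[OF that _ K]) (auto intro: sum_nonneg)
  have "norm (mpow M n \<beta> \<gamma>) \<le> C ^ n" for n \<beta>
  proof (induction n arbitrary: \<beta>)
    case 0
    then show ?case by (simp add: mpow_0 mone_def)
  next
    case (Suc n)
    show ?case
    proof (cases "\<beta> \<in> K")
      case False
      then have "mpow M (Suc n) \<beta> \<gamma> = 0"
        using order_upper_mpow[OF M, of "Suc n"] by (auto simp: order_upper_def K_def)
      then show ?thesis using \<open>C \<ge> 0\<close> by simp
    next
      case True
      have "mpow M (Suc n) \<beta> \<gamma> = (\<Sum>\<epsilon>\<in>K. M \<beta> \<epsilon> * mpow M n \<epsilon> \<gamma>)"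
        unfolding mpow_Suc K_def by (rule mmult_order_upper_eq_sum[OF order_upper_mpow[OF M]])
      then have "norm (mpow M (Suc n) \<beta> \<gamma>) \<le> (\<Sum>\<epsilon>\<in>K. norm (M \<beta> \<epsilon>) * norm (mpow M n \<epsilon> \<gamma>))"
        by (simp add: sum_norm_le norm_mult)
      also have "\<dots> \<le> (\<Sum>\<epsilon>\<in>K. norm (M \<beta> \<epsilon>)) * C ^ n"
        unfolding sum_distrib_right using Suc by (intro sum_mono mult_left_mono) auto
      also have "\<dots> \<le> C * C ^ n"
        using row_bound[OF True] \<open>C \<ge> 0\<close> by (intro mult_right_mono) auto
      finally show ?thesis by simp
    qed
  qed
  with \<open>C \<ge> 0\<close> show ?thesis using that by blast
qed

lemma summable_norm_mexp_series:
  fixes M :: "('d::finite) smat"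
  assumes "order_upper M"
  shows "summable (\<lambda>n. norm (mpow M n \<beta> \<gamma> / of_nat (fact n)))"
proof -
  obtain C where "C \<ge> 0" and C: "\<And>n \<beta>. norm (mpow M n \<beta> \<gamma>) \<le> C ^ n"
    using mpow_norm_bound[OF assms] by blast
  show ?thesis
  proof (rule summable_comparison_test'[OF summable_exp[of C]])
    fix n
    have "norm (norm (mpow M n \<beta> \<gamma> / of_nat (fact n))) \<le> C ^ n / fact n"
      by (simp add: norm_divide divide_right_mono C)
    then show "norm (norm (mpow M n \<beta> \<gamma> / of_nat (fact n))) \<le> inverse (fact n) * C ^ n"
      by (simp add: field_simps)
  qed
qed

lemma sum_alternating_inverse_fact:
  "(\<Sum>i\<le>k. (-1) ^ i / (fact i * fact (k - i)) :: 'a::field_char_0) = (if k = 0 then 1 else 0)"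
proof -
  have "(-1) ^ i / (fact i * fact (k - i)) = (-1) ^ i * of_nat (k choose i) / (fact k :: 'a)"
    if "i \<le> k" for i
    using binomial_fact[OF that, where 'a='a] by (simp add: field_simps)
  then have "(\<Sum>i\<le>k. (-1) ^ i / (fact i * fact (k - i)) :: 'a)
      = (\<Sum>i\<le>k. (-1) ^ i * of_nat (k choose i)) / fact k"
    by (simp add: sum_divide_distrib)
  then show ?thesis by (cases "k = 0") (simp_all add: choose_alternating_sum)
qed

text \<open>The \<open>k\<close>-th term of the Cauchy product of the series \<open>exp(-M)\<close> and \<open>exp M\<close>.\<close>
lemma mexp_uminus_cauchy_term:
  fixes M :: "('d::finite) smat"
  assumes M: "order_upper M"
  shows "(\<Sum>\<delta> | \<delta> \<le> \<gamma>. \<Sum>i\<le>k. mpow (- M) i \<beta> \<delta> / of_nat (fact i)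
            * (mpow M (k - i) \<delta> \<gamma> / of_nat (fact (k - i))))
         = (if k = 0 then mone \<beta> \<gamma> else 0)"
proof -
  have "mpow M k \<beta> \<gamma> = (\<Sum>\<delta> | \<delta> \<le> \<gamma>. mpow M i \<beta> \<delta> * mpow M (k - i) \<delta> \<gamma>)" if "i \<le> k" for i
    using mpow_add[OF M, of i "k - i"] that
    by (simp add: mmult_order_upper_eq_sum[OF order_upper_mpow[OF M]])
  then have "(\<Sum>\<delta> | \<delta> \<le> \<gamma>. \<Sum>i\<le>k. mpow (- M) i \<beta> \<delta> / of_nat (fact i)
              * (mpow M (k - i) \<delta> \<gamma> / of_nat (fact (k - i))))
      = (\<Sum>i\<le>k. (-1) ^ i / (fact i * fact (k - i))) * mpow M k \<beta> \<gamma>"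
    by (subst sum.swap) (simp add: mpow_uminus sum_distrib_left sum_distrib_right mult_ac)
  then show ?thesis by (simp add: sum_alternating_inverse_fact mpow_0)
qed

lemma mexp_uminus_mmult_mexp:
  fixes M :: "('d::finite) smat"
  assumes M: "order_upper M"
  shows "mmult (mexp (- M)) (mexp M) = mone"
proof (intro ext)
  fix \<beta> \<gamma> :: "'d midx"
  define a where "a \<delta> i = mpow (- M) i \<beta> \<delta> / of_nat (fact i)" for \<delta> i
  define e where "e \<delta> j = mpow M j \<delta> \<gamma> / of_nat (fact j)" for \<delta> j
  have "(\<lambda>k. \<Sum>i\<le>k. a \<delta> i * e \<delta> (k - i)) sums ((\<Sum>i. a \<delta> i) * (\<Sum>j. e \<delta> j))" for \<delta>
    unfolding a_def e_def
    by (rule Cauchy_product_sums summable_norm_mexp_series order_upper_uminus M)+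
  then have "(\<lambda>k. \<Sum>\<delta> | \<delta> \<le> \<gamma>. \<Sum>i\<le>k. a \<delta> i * e \<delta> (k - i))
      sums (\<Sum>\<delta> | \<delta> \<le> \<gamma>. (\<Sum>i. a \<delta> i) * (\<Sum>j. e \<delta> j))"
    by (rule sums_sum)
  moreover have "(\<lambda>k. \<Sum>\<delta> | \<delta> \<le> \<gamma>. \<Sum>i\<le>k. a \<delta> i * e \<delta> (k - i))
      = (\<lambda>k. if k = 0 then mone \<beta> \<gamma> else 0)"
    unfolding a_def e_def by (rule ext mexp_uminus_cauchy_term[OF M])+
  moreover have "mmult (mexp (- M)) (mexp M) \<beta> \<gamma> = (\<Sum>\<delta> | \<delta> \<le> \<gamma>. (\<Sum>i. a \<delta> i) * (\<Sum>j. e \<delta> j))"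
    unfolding mmult_order_upper_eq_sum[OF order_upper_mexp[OF M]] by (simp add: a_def e_def mexp_def)
  ultimately have "(\<lambda>k. if k = 0 then mone \<beta> \<gamma> else 0) sums mmult (mexp (- M)) (mexp M) \<beta> \<gamma>"
    by simp
  moreover have "(\<lambda>k. if k = 0 then mone \<beta> \<gamma> else 0) sums mone \<beta> \<gamma>"
    using sums_single[of 0 "\<lambda>_. mone \<beta> \<gamma>"] by simp
  ultimately show "mmult (mexp (- M)) (mexp M) \<beta> \<gamma> = mone \<beta> \<gamma>"
    by (rule sums_unique2)
qed

lemma order_upper_W0: "order_upper (W0 t)"
  unfolding W0_def by (rule order_upper_mexp[OF order_upper_tLam])

lemma W0inv_eq: "W0inv t = mexp (- tLam t)"
proof -
  have "(\<lambda>\<beta> \<gamma>. - tLam t \<beta> \<gamma>) = - tLam t" by (simp add: fun_eq_iff)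
  then show ?thesis by (simp add: W0inv_def)
qed

lemma order_upper_W0inv: "order_upper (W0inv t)"
  unfolding W0inv_eq by (rule order_upper_mexp[OF order_upper_uminus[OF order_upper_tLam]])

lemma W0inv_mmult_W0: "mmult (W0inv t) (W0 t) = mone"
  unfolding W0inv_eq W0_def by (rule mexp_uminus_mmult_mexp[OF order_upper_tLam])

section \<open>Triple products\<close>

lemma
  fixes f :: "'i \<Rightarrow> 'a \<Rightarrow> 'b::{topological_comm_monoid_add, t2_space}"
  assumes "finite I" "\<And>i. i \<in> I \<Longrightarrow> f i summable_on A"
  shows summable_on_sum: "(\<lambda>x. \<Sum>i\<in>I. f i x) summable_on A"
    and infsum_sum: "(\<Sum>\<^sub>\<infinity>x\<in>A. \<Sum>i\<in>I. f i x) = (\<Sum>i\<in>I. \<Sum>\<^sub>\<infinity>x\<in>A. f i x)"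
proof -
  have "(\<lambda>x. \<Sum>i\<in>I. f i x) summable_on A \<and> (\<Sum>\<^sub>\<infinity>x\<in>A. \<Sum>i\<in>I. f i x) = (\<Sum>i\<in>I. \<Sum>\<^sub>\<infinity>x\<in>A. f i x)"
    using assms
  proof (induction I rule: finite_induct)
    case (insert j I)
    then have "f j summable_on A" "(\<lambda>x. \<Sum>i\<in>I. f i x) summable_on A"
      "(\<Sum>\<^sub>\<infinity>x\<in>A. \<Sum>i\<in>I. f i x) = (\<Sum>i\<in>I. \<Sum>\<^sub>\<infinity>x\<in>A. f i x)"
      by simp_all
    with insert.hyps show ?case by (simp add: infsum_add summable_on_add)
  qed simp
  then show "(\<lambda>x. \<Sum>i\<in>I. f i x) summable_on A" "(\<Sum>\<^sub>\<infinity>x\<in>A. \<Sum>i\<in>I. f i x) = (\<Sum>i\<in>I. \<Sum>\<^sub>\<infinity>x\<in>A. f i x)"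
    by simp_all
qed

lemma mmult3_defined_summable:
  assumes "mmult3_defined A B C"
  shows "(\<lambda>(\<beta>, \<delta>). A \<alpha> \<beta> * B \<beta> \<delta> * C \<delta> \<gamma>) summable_on UNIV"
proof (rule abs_summable_summable)
  have "(\<lambda>(\<beta>, \<delta>). norm (A \<alpha> \<beta> * B \<beta> \<delta> * C \<delta> \<gamma>)) summable_on UNIV"
    using assms unfolding mmult3_defined_def by blast
  then show "(\<lambda>p. norm ((\<lambda>(\<beta>, \<delta>). A \<alpha> \<beta> * B \<beta> \<delta> * C \<delta> \<gamma>) p)) summable_on UNIV"
    by (simp add: case_prod_unfold)
qed

lemma mmult_mmult_eq_mmult3:
  assumes "mmult3_defined A B C"
  shows "mmult (mmult A B) C = mmult3 A B C"
proof (intro ext)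
  fix \<alpha> \<gamma>
  define f where "f \<beta> \<delta> = A \<alpha> \<beta> * B \<beta> \<delta> * C \<delta> \<gamma>" for \<beta> \<delta>
  have summable: "(\<lambda>(\<beta>, \<delta>). f \<beta> \<delta>) summable_on UNIV \<times> UNIV"
    using mmult3_defined_summable[OF assms] by (simp add: f_def)
  have "mmult (mmult A B) C \<alpha> \<gamma> = (\<Sum>\<^sub>\<infinity>\<delta>. \<Sum>\<^sub>\<infinity>\<beta>. f \<beta> \<delta>)"
    unfolding mmult_def f_def by (simp add: infsum_cmult_left')
  also have "\<dots> = (\<Sum>\<^sub>\<infinity>\<beta>. \<Sum>\<^sub>\<infinity>\<delta>. f \<beta> \<delta>)"
    by (rule infsum_swap_banach[OF summable, symmetric])
  also have "\<dots> = mmult3 A B C \<alpha> \<gamma>"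
    using infsum_Sigma'_banach[OF summable] by (simp add: mmult3_def f_def)
  finally show "mmult (mmult A B) C \<alpha> \<gamma> = mmult3 A B C \<alpha> \<gamma>" .
qed

lemma mmult3_defined_mmult_left:
  assumes L: "row_finite L" and defined: "mmult3_defined V G W"
  shows "mmult3_defined (mmult L V) G W"
  unfolding mmult3_defined_def
proof (intro allI)
  fix \<alpha> \<gamma>
  define F where "F = {\<beta>. L \<alpha> \<beta> \<noteq> 0}"
  have F: "finite F" using L by (simp add: row_finite_def F_def)
  define g where "g \<beta> = (\<lambda>(x, \<delta>). norm (L \<alpha> \<beta>) * norm (V \<beta> x * G x \<delta> * W \<delta> \<gamma>))" for \<beta>
  have "(\<lambda>(x, \<delta>). norm (V \<beta> x * G x \<delta> * W \<delta> \<gamma>)) summable_on UNIV" for \<beta>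
    using defined unfolding mmult3_defined_def by blast
  then have "g \<beta> summable_on UNIV" for \<beta>
    unfolding g_def case_prod_unfold by (rule summable_on_cmult_right)
  then have "(\<lambda>p. \<Sum>\<beta>\<in>F. g \<beta> p) summable_on UNIV"
    by (intro summable_on_sum F)
  then show "(\<lambda>(x, \<delta>). norm (mmult L V \<alpha> x * G x \<delta> * W \<delta> \<gamma>)) summable_on UNIV"
  proof (rule summable_on_comparison_test)
    fix p :: "'a midx \<times> 'a midx"
    obtain x \<delta> where p: "p = (x, \<delta>)" by fastforce
    have "norm (mmult L V \<alpha> x * G x \<delta> * W \<delta> \<gamma>) = norm (\<Sum>\<beta>\<in>F. L \<alpha> \<beta> * (V \<beta> x * G x \<delta> * W \<delta> \<gamma>))"
      by (simp add: mmult_eq_sum_row[OF L] F_def sum_distrib_right mult.assoc)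
    also have "\<dots> \<le> (\<Sum>\<beta>\<in>F. g \<beta> p)"
      unfolding g_def p by (auto intro: sum_norm_le simp: norm_mult)
    finally show "(\<lambda>(x, \<delta>). norm (mmult L V \<alpha> x * G x \<delta> * W \<delta> \<gamma>)) p \<le> (\<Sum>\<beta>\<in>F. g \<beta> p)"
      by (simp add: p)
  qed (simp add: case_prod_unfold)
qed

lemma mmult3_mmult_left:
  assumes L: "row_finite L" and defined: "mmult3_defined V G W"
  shows "mmult3 (mmult L V) G W = mmult L (mmult3 V G W)"
proof (intro ext)
  fix \<alpha> \<gamma>
  define F where "F = {\<beta>. L \<alpha> \<beta> \<noteq> 0}"
  have F: "finite F" using L by (simp add: row_finite_def F_def)
  define f where "f \<beta> = (\<lambda>(x, \<delta>). L \<alpha> \<beta> * (V \<beta> x * G x \<delta> * W \<delta> \<gamma>))" for \<beta>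
  have summable: "f \<beta> summable_on UNIV" for \<beta>
    unfolding f_def case_prod_unfold
    by (rule summable_on_cmult_right) (use mmult3_defined_summable[OF defined] in \<open>simp add: case_prod_unfold\<close>)
  have "mmult3 (mmult L V) G W \<alpha> \<gamma> = (\<Sum>\<^sub>\<infinity>p. \<Sum>\<beta>\<in>F. f \<beta> p)"
    unfolding mmult3_def f_def
    by (intro infsum_cong) (simp add: case_prod_unfold mmult_eq_sum_row[OF L] F_def sum_distrib_right mult.assoc)
  also have "\<dots> = (\<Sum>\<beta>\<in>F. \<Sum>\<^sub>\<infinity>p. f \<beta> p)"
    by (rule infsum_sum[OF F summable])
  also have "\<dots> = (\<Sum>\<beta>\<in>F. L \<alpha> \<beta> * mmult3 V G W \<beta> \<gamma>)"
    by (simp add: f_def mmult3_def case_prod_unfold infsum_cmult_right')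
  also have "\<dots> = mmult L (mmult3 V G W) \<alpha> \<gamma>"
    by (simp add: mmult_eq_sum_row[OF L] F_def)
  finally show "mmult3 (mmult L V) G W \<alpha> \<gamma> = mmult L (mmult3 V G W) \<alpha> \<gamma>" .
qed

lemma mmult_mmult_mmult_eq_mmult3:
  assumes "row_finite L" "mmult3_defined V G W"
  shows "mmult (mmult (mmult L V) G) W = mmult L (mmult3 V G W)"
  using assms by (simp add: mmult_mmult_eq_mmult3 mmult3_defined_mmult_left mmult3_mmult_left)

theorem mainTheorem9:
  fixes G Z1 Z2 S1 S2 H :: "('d::{finite,linorder}) smat"
    and t1 t2 :: "'d midx \<Rightarrow> complex"
  assumes Gt_defined: "mmult3_defined (W0 t1) G (mtrans (W0inv t2))"
    and S1: "block_lower_unitriangular S1"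
    and S2: "block_lower_unitriangular S2"
    and H: "block_diagonal_nonsingular H"
    and GB: "mmult3 (W0 t1) G (mtrans (W0inv t2))
               = mmult (mmult (lu_inv S1) H) (mtrans (lu_inv S2))"
    and Z1: "block_strictly_lower (mmult Z1 (W0inv t1))"
    and Z2: "block_upper (mmult Z2 (mtrans (W0inv t2)))"
    and ZG: "mmult Z1 G = Z2"
  shows "Z1 = (\<lambda>_ _. 0) \<and> Z2 = (\<lambda>_ _. 0)"
proof -
  define L where "L = mmult Z1 (W0inv t1)"
  have Z1_eq: "Z1 = mmult L (W0 t1)"
    unfolding L_def
    by (subst mmult_assoc_col_finite) (simp_all add: order_upper_col_finite order_upper_W0
        order_upper_W0inv W0inv_mmult_W0)
  have "row_finite L"
    using Z1 unfolding L_def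
    by (intro block_lower_row_finite block_strictly_lower_imp_block_lower)
  then have "mmult Z2 (mtrans (W0inv t2)) = mmult L (mmult (mmult (lu_inv S1) H) (mtrans (lu_inv S2)))"
    unfolding ZG[symmetric] Z1_eq GB[symmetric] using Gt_defined by (rule mmult_mmult_mmult_eq_mmult3)
  with Z2 have "block_upper (mmult L (mmult (mmult (lu_inv S1) H) (mtrans (lu_inv S2))))"
    by simp
  then have "L = (\<lambda>_ _. 0)"
    by (rule block_strictly_lower_mmult_factorization_eq_zero[OF Z1[folded L_def] S1 S2 H])
  then show ?thesis using Z1_eq ZG by simp
qed

end
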